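(* Let $p \geq q$ and $n\ge 1$ be positive integers and let $B$ be a $p\times q$ matrix with nonnegative real entries. Let $C$ be the $(nq+p)\times(nq+p)$ block matrix whose first block row is $[\,0_p\ B\ B\ \cdots\ B\,]$ ($n$ copies of $B$), whose first block column is $[\,0_p\ B^T\ \cdots\ B^T\,]^T$ ($n$ copies of $B^T$), and whose remaining blocks are all zero; and let $D$ be the $(np+q)\times(np+q)$ block matrix whose first block row is $[\,0_q\ B^T\ B^T\ \cdots\ B^T\,]$ ($n$ copies of $B^T$), whose first block column is $[\,0_q\ B\ \cdots\ B\,]^T$ ($n$ copies of $B$), and whose remaining blocks are all zero. Then the normalized Laplacians $L(C\oplus 0_{(n-1)(p-q)})$ and $L(D)$ are cospectral.
   Context: For matrices $X,Y$, $X\oplus Y=\begin{bmatrix} X&0\\0&Y\end{bmatrix}$; $0_m$ is the $m\times m$ zero matrix. For a nonnegative real symmetric matrix $M$ with positive row sums, its normalized Laplacian is $L(M)=I-\Delta^{-1/2}M\Delta^{-1/2}$, where $\Delta$ is the diagonal matrix of row sums of $M$. If $M$ has zero row sums, write (after a simultaneous permutation of rows and columns) $M=M_1\oplus 0_k$ where $M_1$ has positive row sums; then $L(M)=L(M_1)\oplus I_k$ (equivalently, $L(M)=I-(\Delta^{\dagger})^{1/2}M(\Delta^{\dagger})^{1/2}$ with $\Delta^\dagger$ the Moore–Penrose inverse of $\Delta$). Two square matrices are cospectral if they have the same eigenvalues with the same multiplicities. *)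

theory Defs
  imports "Jordan_Normal_Form.Char_Poly" "Jordan_Normal_Form.Matrix"
begin

definition dsum :: "real mat \<Rightarrow> real mat \<Rightarrow> real mat" where
  "dsum X Y = four_block_mat X (0\<^sub>m (dim_row X) (dim_col Y)) (0\<^sub>m (dim_row Y) (dim_col X)) Y"

definition rowsum :: "real mat \<Rightarrow> nat \<Rightarrow> real" where
  "rowsum M i = (\<Sum>j<dim_col M. M $$ (i, j))"

definition dhalf :: "real mat \<Rightarrow> nat \<Rightarrow> real" where
  "dhalf M i = (if rowsum M i > 0 then 1 / sqrt (rowsum M i) else 0)"

definition norm_lap :: "real mat \<Rightarrow> real mat" where
  "norm_lap M = mat (dim_row M) (dim_col M)
     (\<lambda>(i, j). (if i = j then 1 else 0) - dhalf M i * M $$ (i, j) * dhalf M j)"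

definition cospectral :: "real mat \<Rightarrow> real mat \<Rightarrow> bool" where
  "cospectral X Y \<longleftrightarrow> X \<in> carrier_mat (dim_row X) (dim_row X) \<and> Y \<in> carrier_mat (dim_row X) (dim_row X)
     \<and> (\<forall>z::complex. order z (char_poly (map_mat complex_of_real X))
                   = order z (char_poly (map_mat complex_of_real Y)))"

definition blockC :: "nat \<Rightarrow> nat \<Rightarrow> nat \<Rightarrow> real mat \<Rightarrow> real mat" where
  "blockC n p q B = mat (n * q + p) (n * q + p) (\<lambda>(i, j).
     if i < p \<and> p \<le> j then B $$ (i, (j - p) mod q)
     else if p \<le> i \<and> j < p then B $$ (j, (i - p) mod q)
     else 0)"

definition blockD :: "nat \<Rightarrow> nat \<Rightarrow> nat \<Rightarrow> real mat \<Rightarrow> real mat" where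
  "blockD n p q B = mat (n * p + q) (n * p + q) (\<lambda>(i, j).
     if i < q \<and> q \<le> j then B $$ ((j - q) mod p, i)
     else if q \<le> i \<and> j < q then B $$ ((i - q) mod p, j)
     else 0)"

end

theory Submission
  imports Defs
begin

(*
  Both matrices are bipartite on N = n p + q vertices, split as p + ((n - 1) p + q) for the
  padded C and as q + n p for D. The normalized Laplacian of such a matrix is
  [[I, -P], [-P^T, I]], whose characteristic polynomial chi in y = x - 1 satisfies
  chi y^a = y^b det (y^2 I - P P^T). With row sums r and column sums c of B, put
  X = (B_ik / sqrt (n r_i c_k)): the normalized off-diagonal block is n copies of X, padded by
  zero columns, for C and n copies of X^T for D, so P P^T is n X X^T resp. n X^T X.
  These two determinants are the Schur complements of the two diagonal blocks of
  K = [[y I, n X], [X^T, y I]], whence chi_C y^(p+q) = y^N det K = chi_D y^(p+q).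
*)

lemma det_scalar_four_block_mat_upper:
  fixes y :: "'a::idom"
  assumes P: "P \<in> carrier_mat a b" and Q: "Q \<in> carrier_mat b a"
  shows "det (four_block_mat (y \<cdot>\<^sub>m 1\<^sub>m a) P Q (y \<cdot>\<^sub>m 1\<^sub>m b)) * y ^ a
       = y ^ b * det (y\<^sup>2 \<cdot>\<^sub>m 1\<^sub>m a - P * Q)"
proof -
  let ?K = "four_block_mat (y \<cdot>\<^sub>m 1\<^sub>m a) P Q (y \<cdot>\<^sub>m 1\<^sub>m b)"
  let ?R = "four_block_mat (y \<cdot>\<^sub>m 1\<^sub>m a) (0\<^sub>m a b) (- Q) (1\<^sub>m b)"
  have "?K * ?R = four_block_mat ((y \<cdot>\<^sub>m 1\<^sub>m a) * (y \<cdot>\<^sub>m 1\<^sub>m a) + P * (- Q))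
      ((y \<cdot>\<^sub>m 1\<^sub>m a) * 0\<^sub>m a b + P * 1\<^sub>m b) (Q * (y \<cdot>\<^sub>m 1\<^sub>m a) + (y \<cdot>\<^sub>m 1\<^sub>m b) * (- Q))
      (Q * 0\<^sub>m a b + (y \<cdot>\<^sub>m 1\<^sub>m b) * 1\<^sub>m b)"
    using P Q by (intro mult_four_block_mat) auto
  also have "\<dots> = four_block_mat (y\<^sup>2 \<cdot>\<^sub>m 1\<^sub>m a - P * Q) P (0\<^sub>m b a) (y \<cdot>\<^sub>m 1\<^sub>m b)"
    using P Q by (intro arg_cong4[where f = four_block_mat] eq_matI) (auto simp: power2_eq_square)
  finally have KR: "?K * ?R = \<dots>" .
  have "det ?K * y ^ a = det ?K * det ?R"
    using Q by (subst det_four_block_mat_upper_right_zero[of _ a _ b]) auto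
  also have "\<dots> = det (?K * ?R)"
    using P Q by (intro det_mult[symmetric, of _ "a + b"]) auto
  also have "\<dots> = y ^ b * det (y\<^sup>2 \<cdot>\<^sub>m 1\<^sub>m a - P * Q)"
    unfolding KR using P Q by (subst det_four_block_mat_lower_left_zero[of _ a _ b]) auto
  finally show ?thesis .
qed

lemma det_scalar_four_block_mat_lower:
  fixes y :: "'a::idom"
  assumes P: "P \<in> carrier_mat a b" and Q: "Q \<in> carrier_mat b a"
  shows "det (four_block_mat (y \<cdot>\<^sub>m 1\<^sub>m a) P Q (y \<cdot>\<^sub>m 1\<^sub>m b)) * y ^ b
       = y ^ a * det (y\<^sup>2 \<cdot>\<^sub>m 1\<^sub>m b - Q * P)"
proof -
  let ?K = "four_block_mat (y \<cdot>\<^sub>m 1\<^sub>m a) P Q (y \<cdot>\<^sub>m 1\<^sub>m b)"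
  let ?R = "four_block_mat (1\<^sub>m a) (- P) (0\<^sub>m b a) (y \<cdot>\<^sub>m 1\<^sub>m b)"
  have "?K * ?R = four_block_mat ((y \<cdot>\<^sub>m 1\<^sub>m a) * 1\<^sub>m a + P * 0\<^sub>m b a)
      ((y \<cdot>\<^sub>m 1\<^sub>m a) * (- P) + P * (y \<cdot>\<^sub>m 1\<^sub>m b)) (Q * 1\<^sub>m a + (y \<cdot>\<^sub>m 1\<^sub>m b) * 0\<^sub>m b a)
      (Q * (- P) + (y \<cdot>\<^sub>m 1\<^sub>m b) * (y \<cdot>\<^sub>m 1\<^sub>m b))"
    using P Q by (intro mult_four_block_mat) auto
  also have "\<dots> = four_block_mat (y \<cdot>\<^sub>m 1\<^sub>m a) (0\<^sub>m a b) Q (y\<^sup>2 \<cdot>\<^sub>m 1\<^sub>m b - Q * P)"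
    using P Q by (intro arg_cong4[where f = four_block_mat] eq_matI) (auto simp: power2_eq_square)
  finally have KR: "?K * ?R = \<dots>" .
  have "det ?K * y ^ b = det ?K * det ?R"
    using P by (subst det_four_block_mat_lower_left_zero[of _ a _ b]) auto
  also have "\<dots> = det (?K * ?R)"
    using P Q by (intro det_mult[symmetric, of _ "a + b"]) auto
  also have "\<dots> = y ^ a * det (y\<^sup>2 \<cdot>\<^sub>m 1\<^sub>m b - Q * P)"
    unfolding KR using P Q by (subst det_four_block_mat_upper_right_zero[of _ a _ b]) auto
  finally show ?thesis .
qed

(* Stated before the interpretation below, whose simp rule [:1:] = 1 makes one_pCons loop. *)
lemma pCons_0_1_minus_1: "pCons 0 1 - 1 = pCons (- 1) (1 :: 'a::comm_ring_1 poly)"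
  by (simp add: one_pCons)

interpretation const_poly_hom: comm_ring_hom "\<lambda>x::'a::comm_ring_1. [:x:]"
  by unfold_locales auto

lemma char_poly_four_block_unit_diag:
  fixes P :: "'a::idom mat"
  assumes P: "P \<in> carrier_mat a b" and Q: "Q \<in> carrier_mat b a"
  shows "char_poly (four_block_mat (1\<^sub>m a) (- P) (- Q) (1\<^sub>m b)) * [:-1, 1:] ^ a
     = [:-1, 1:] ^ b * det ([:-1, 1:]\<^sup>2 \<cdot>\<^sub>m 1\<^sub>m a - map_mat (\<lambda>x. [:x:]) (P * Q))"
proof -
  let ?y = "[:-1, 1:] :: 'a poly"
  have "char_poly_matrix (four_block_mat (1\<^sub>m a) (- P) (- Q) (1\<^sub>m b))
      = four_block_mat (?y \<cdot>\<^sub>m 1\<^sub>m a) (map_mat (\<lambda>x. [:x:]) P) (map_mat (\<lambda>x. [:x:]) Q) (?y \<cdot>\<^sub>m 1\<^sub>m b)"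
    unfolding char_poly_matrix_def using P Q
    by (intro eq_matI) (auto simp: four_block_mat_def pCons_0_1_minus_1)
  then have "char_poly (four_block_mat (1\<^sub>m a) (- P) (- Q) (1\<^sub>m b)) * ?y ^ a
      = ?y ^ b * det (?y\<^sup>2 \<cdot>\<^sub>m 1\<^sub>m a - map_mat (\<lambda>x. [:x:]) P * map_mat (\<lambda>x. [:x:]) Q)"
    unfolding char_poly_def using P Q by (simp add: det_scalar_four_block_mat_upper[of _ a b])
  also have "map_mat (\<lambda>x. [:x:]) P * map_mat (\<lambda>x. [:x:]) Q = map_mat (\<lambda>x. [:x:]) (P * Q)"
    using const_poly_hom.mat_hom_mult[OF P Q] by simp
  finally show ?thesis .
qed

lemma cospectral_if_char_poly_eq:
  assumes A: "A \<in> carrier_mat m m" and B: "B \<in> carrier_mat m m" and eq: "char_poly A = char_poly B"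
  shows "cospectral A B"
proof -
  have "char_poly (map_mat complex_of_real A) = char_poly (map_mat complex_of_real B)"
    unfolding of_real_hom.char_poly_hom[OF A] of_real_hom.char_poly_hom[OF B] eq ..
  with A B show ?thesis
    unfolding cospectral_def by simp
qed

definition pinv_sqrt :: "real \<Rightarrow> real" where
  "pinv_sqrt x = (if x > 0 then 1 / sqrt x else 0)"

lemma dhalf_eq_pinv_sqrt: "dhalf M i = pinv_sqrt (rowsum M i)"
  unfolding dhalf_def pinv_sqrt_def ..

lemma pinv_sqrt_mult_swap:
  assumes "c > 0"
  shows "pinv_sqrt (c * x) * pinv_sqrt y = pinv_sqrt (c * y) * pinv_sqrt x"
proof (cases "x > 0 \<and> y > 0")
  case True
  then have "pinv_sqrt (c * x) * pinv_sqrt y = 1 / (sqrt c * sqrt x * sqrt y)"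
    and "pinv_sqrt (c * y) * pinv_sqrt x = 1 / (sqrt c * sqrt y * sqrt x)"
    using assms by (simp_all add: pinv_sqrt_def real_sqrt_mult)
  then show ?thesis
    by (simp add: mult.commute mult.left_commute)
next
  case False
  then show ?thesis
    using assms by (auto simp: pinv_sqrt_def zero_less_mult_iff)
qed

definition norm_adj_block :: "real mat \<Rightarrow> nat \<Rightarrow> nat \<Rightarrow> real mat" where
  "norm_adj_block M a b = mat a b (\<lambda>(i, j). dhalf M i * M $$ (i, a + j) * dhalf M (a + j))"

lemma norm_lap_bipartite:
  assumes M: "M \<in> carrier_mat (a + b) (a + b)" and sym: "transpose_mat M = M"
    and upper: "\<And>i j. i < a \<Longrightarrow> j < a \<Longrightarrow> M $$ (i, j) = 0"
    and lower: "\<And>i j. a \<le> i \<Longrightarrow> a \<le> j \<Longrightarrow> i < a + b \<Longrightarrow> j < a + b \<Longrightarrow> M $$ (i, j) = 0"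
  shows "norm_lap M = four_block_mat (1\<^sub>m a) (- norm_adj_block M a b)
      (- transpose_mat (norm_adj_block M a b)) (1\<^sub>m b)"
    (is "_ = ?L")
proof (rule eq_matI)
  fix i j
  assume "i < dim_row ?L" and "j < dim_col ?L"
  then have i: "i < a + b" and j: "j < a + b"
    by (auto simp: norm_adj_block_def)
  have swap: "M $$ (j, i) = M $$ (i, j)"
    using i j M by (subst (2) sym[symmetric]) auto
  show "norm_lap M $$ (i, j) = ?L $$ (i, j)"
    using i j M
    by (cases "i < a"; cases "j < a") (auto simp: norm_lap_def norm_adj_block_def upper lower swap)
qed (use M in \<open>auto simp: norm_lap_def norm_adj_block_def\<close>)

lemma char_poly_norm_lap_bipartite:
  assumes M: "M \<in> carrier_mat (a + b) (a + b)" and sym: "transpose_mat M = M"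
    and upper: "\<And>i j. i < a \<Longrightarrow> j < a \<Longrightarrow> M $$ (i, j) = 0"
    and lower: "\<And>i j. a \<le> i \<Longrightarrow> a \<le> j \<Longrightarrow> i < a + b \<Longrightarrow> j < a + b \<Longrightarrow> M $$ (i, j) = 0"
  shows "char_poly (norm_lap M) * [:-1, 1:] ^ a = [:-1, 1:] ^ b * det ([:-1, 1:]\<^sup>2 \<cdot>\<^sub>m 1\<^sub>m a
      - map_mat (\<lambda>x. [:x:]) (norm_adj_block M a b * transpose_mat (norm_adj_block M a b)))"
proof -
  have L: "norm_lap M = four_block_mat (1\<^sub>m a) (- norm_adj_block M a b)
      (- transpose_mat (norm_adj_block M a b)) (1\<^sub>m b)"
    using assms by (rule norm_lap_bipartite)
  have "norm_adj_block M a b \<in> carrier_mat a b"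
    by (simp add: norm_adj_block_def)
  then show ?thesis
    unfolding L by (intro char_poly_four_block_unit_diag) auto
qed

lemma sum_lessThan_mult_mod:
  fixes f :: "nat \<Rightarrow> 'a::comm_semiring_1"
  shows "(\<Sum>t<n * q. f (t mod q)) = of_nat n * (\<Sum>k<q. f k)"
proof (induction n)
  case 0
  then show ?case by simp
next
  case (Suc n)
  have "(\<Sum>t<Suc n * q. f (t mod q)) = (\<Sum>t<n * q. f (t mod q)) + (\<Sum>t=n * q..<n * q + q. f (t mod q))"
    by (simp add: lessThan_atLeast0 sum.atLeastLessThan_concat add.commute[of q])
  also have "(\<Sum>t=n * q..<n * q + q. f (t mod q)) = (\<Sum>k<q. f k)"
    using sum.shift_bounds_nat_ivl[of "\<lambda>t. f (t mod q)" 0 "n * q" q]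
    by (simp add: lessThan_atLeast0 add.commute)
  finally show ?case
    using Suc by (simp add: algebra_simps)
qed

lemma sum_shifted_window:
  fixes h :: "nat \<Rightarrow> 'a::comm_monoid_add"
  assumes "s + L \<le> N"
  shows "(\<Sum>j<N. if s \<le> j \<and> j < s + L then h (j - s) else 0) = (\<Sum>t<L. h t)"
proof -
  have "(\<Sum>j<N. if s \<le> j \<and> j < s + L then h (j - s) else 0)
      = (\<Sum>j\<in>{..<N} \<inter> {s..<s + L}. h (j - s))"
    by (subst sum.inter_restrict) (auto intro!: sum.cong)
  also have "{..<N} \<inter> {s..<s + L} = {s..<s + L}"
    using assms by auto
  also have "(\<Sum>j\<in>{s..<s + L}. h (j - s)) = (\<Sum>t<L. h t)"
    using sum.shift_bounds_nat_ivl[of "\<lambda>j. h (j - s)" 0 s L]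
    by (simp add: lessThan_atLeast0 add.commute)
  finally show ?thesis .
qed

lemma sum_lessThan_prefix:
  fixes h :: "nat \<Rightarrow> 'a::comm_monoid_add"
  assumes "L \<le> N"
  shows "(\<Sum>j<N. if j < L then h j else 0) = (\<Sum>j<L. h j)"
  by (rule sum.mono_neutral_cong_right) (use assms in auto)

definition tile_cols :: "nat \<Rightarrow> 'a::zero mat \<Rightarrow> nat \<Rightarrow> 'a mat" where
  "tile_cols n A m = mat (dim_row A) m
     (\<lambda>(i, j). if j < n * dim_col A then A $$ (i, j mod dim_col A) else 0)"

lemma dim_tile_cols [simp]:
  "dim_row (tile_cols n A m) = dim_row A" "dim_col (tile_cols n A m) = m"
  by (simp_all add: tile_cols_def)

lemma index_tile_cols [simp]:
  "i < dim_row A \<Longrightarrow> j < m \<Longrightarrow>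
    tile_cols n A m $$ (i, j) = (if j < n * dim_col A then A $$ (i, j mod dim_col A) else 0)"
  by (simp add: tile_cols_def)

lemma tile_cols_mult_transpose:
  fixes A :: "'a::comm_semiring_1 mat"
  assumes "n * dim_col A \<le> m"
  shows "tile_cols n A m * transpose_mat (tile_cols n A m) = of_nat n \<cdot>\<^sub>m (A * transpose_mat A)"
proof (rule eq_matI)
  fix i i' assume "i < dim_row (of_nat n \<cdot>\<^sub>m (A * transpose_mat A))"
    and "i' < dim_col (of_nat n \<cdot>\<^sub>m (A * transpose_mat A))"
  then have i: "i < dim_row A" and i': "i' < dim_row A" by auto
  let ?T = "tile_cols n A m" and ?c = "dim_col A"
  have "(?T * transpose_mat ?T) $$ (i, i') = (\<Sum>j<m. ?T $$ (i, j) * ?T $$ (i', j))"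
    using i i' by (simp add: scalar_prod_def lessThan_atLeast0 del: index_tile_cols)
  also have "\<dots> = (\<Sum>j<m. if j < n * ?c then A $$ (i, j mod ?c) * A $$ (i', j mod ?c) else 0)"
    using i i' by (intro sum.cong) auto
  also have "\<dots> = (\<Sum>t<n * ?c. A $$ (i, t mod ?c) * A $$ (i', t mod ?c))"
    using assms by (rule sum_lessThan_prefix)
  also have "\<dots> = of_nat n * (\<Sum>k<?c. A $$ (i, k) * A $$ (i', k))"
    by (rule sum_lessThan_mult_mod)
  also have "\<dots> = (of_nat n \<cdot>\<^sub>m (A * transpose_mat A)) $$ (i, i')"
    using i i' by (simp add: scalar_prod_def lessThan_atLeast0)
  finally show "(?T * transpose_mat ?T) $$ (i, i') = (of_nat n \<cdot>\<^sub>m (A * transpose_mat A)) $$ (i, i')" .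
qed auto

locale block_pair =
  fixes n p q :: nat and B :: "real mat"
  assumes n_pos: "1 \<le> n" and q_le_p: "q \<le> p"
begin

definition C :: "real mat" where
  "C = dsum (blockC n p q B) (0\<^sub>m ((n - 1) * (p - q)) ((n - 1) * (p - q)))"

definition D :: "real mat" where
  "D = blockD n p q B"

abbreviation N :: nat where
  "N \<equiv> n * p + q"

lemma dim_padded_blockC: "n * q + p + (n - 1) * (p - q) = N"
proof -
  obtain m where "n = Suc m"
    using n_pos by (cases n) auto
  moreover obtain d where "p = q + d"
    using q_le_p le_Suc_ex by blast
  ultimately show ?thesis by (simp add: algebra_simps)
qed

lemma C_carrier: "C \<in> carrier_mat N N"
  unfolding C_def dsum_def dim_padded_blockC[symmetric] by (intro four_block_carrier_mat) (auto simp: blockC_def)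

lemma D_carrier: "D \<in> carrier_mat N N"
  unfolding D_def blockD_def by simp

lemma C_index:
  assumes "i < N" and "j < N"
  shows "C $$ (i, j) = (if i < p \<and> p \<le> j \<and> j < p + n * q then B $$ (i, (j - p) mod q)
    else if p \<le> i \<and> i < p + n * q \<and> j < p then B $$ (j, (i - p) mod q) else 0)"
proof -
  have dims: "dim_row (blockC n p q B) = n * q + p" "dim_col (blockC n p q B) = n * q + p"
    by (simp_all add: blockC_def)
  have "C $$ (i, j) = (if i < n * q + p \<and> j < n * q + p then blockC n p q B $$ (i, j) else 0)"
    using assms unfolding C_def dsum_def dim_padded_blockC[symmetric]
    by (subst index_mat_four_block) (auto simp: dims)
  then show ?thesis
    by (auto simp: blockC_def)
qed

lemma D_index:
  assumes "i < N" and "j < N"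
  shows "D $$ (i, j) = (if i < q \<and> q \<le> j then B $$ ((j - q) mod p, i)
    else if q \<le> i \<and> j < q then B $$ ((i - q) mod p, j) else 0)"
  using assms unfolding D_def blockD_def by auto

lemma transpose_C: "transpose_mat C = C"
  using C_carrier by (intro eq_matI) (auto simp: C_index)

lemma transpose_D: "transpose_mat D = D"
  using D_carrier by (intro eq_matI) (auto simp: D_index)

definition row_sum :: "nat \<Rightarrow> real" where
  "row_sum i = (\<Sum>k<q. B $$ (i, k))"

definition col_sum :: "nat \<Rightarrow> real" where
  "col_sum k = (\<Sum>i<p. B $$ (i, k))"

lemma rowsum_C_upper:
  assumes "i < p"
  shows "rowsum C i = n * row_sum i"
proof -
  have window: "p + n * q \<le> N"
    using dim_padded_blockC by linarith
  have "rowsum C i = (\<Sum>j<N. if p \<le> j \<and> j < p + n * q then B $$ (i, (j - p) mod q) else 0)"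
    unfolding rowsum_def using C_carrier assms window by (intro sum.cong) (auto simp: C_index)
  also have "\<dots> = (\<Sum>t<n * q. B $$ (i, t mod q))"
    using window by (rule sum_shifted_window)
  also have "\<dots> = n * row_sum i"
    unfolding row_sum_def by (rule sum_lessThan_mult_mod)
  finally show ?thesis .
qed

lemma rowsum_C_lower:
  assumes "t < n * q"
  shows "rowsum C (p + t) = col_sum (t mod q)"
proof -
  have window: "p + n * q \<le> N"
    using dim_padded_blockC by linarith
  have "rowsum C (p + t) = (\<Sum>j<N. if j < p then B $$ (j, t mod q) else 0)"
    unfolding rowsum_def using C_carrier assms window by (intro sum.cong) (auto simp: C_index)
  also have "\<dots> = col_sum (t mod q)"
    unfolding col_sum_def using window by (intro sum_lessThan_prefix) simp
  finally show ?thesis .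
qed

lemma rowsum_D_upper:
  assumes "k < q"
  shows "rowsum D k = n * col_sum k"
proof -
  have "rowsum D k = (\<Sum>j<N. if q \<le> j \<and> j < q + n * p then B $$ ((j - q) mod p, k) else 0)"
    unfolding rowsum_def using D_carrier assms by (intro sum.cong) (auto simp: D_index)
  also have "\<dots> = (\<Sum>t<n * p. B $$ (t mod p, k))"
    by (intro sum_shifted_window) simp
  also have "\<dots> = n * col_sum k"
    unfolding col_sum_def by (rule sum_lessThan_mult_mod)
  finally show ?thesis .
qed

lemma rowsum_D_lower:
  assumes "t < n * p"
  shows "rowsum D (q + t) = row_sum (t mod p)"
proof -
  have "rowsum D (q + t) = (\<Sum>j<N. if j < q then B $$ (t mod p, j) else 0)"
    unfolding rowsum_def using D_carrier assms by (intro sum.cong) (auto simp: D_index)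
  also have "\<dots> = row_sum (t mod p)"
    unfolding row_sum_def by (intro sum_lessThan_prefix) simp
  finally show ?thesis .
qed

definition X :: "real mat" where
  "X = mat p q (\<lambda>(i, k). pinv_sqrt (n * row_sum i) * B $$ (i, k) * pinv_sqrt (col_sum k))"

lemma X_carrier: "X \<in> carrier_mat p q"
  unfolding X_def by simp

lemma norm_adj_block_C: "norm_adj_block C p (N - p) = tile_cols n X (N - p)"
proof (rule eq_matI)
  fix i j
  assume "i < dim_row (tile_cols n X (N - p))" and "j < dim_col (tile_cols n X (N - p))"
  then have i: "i < p" and j: "j < N - p"
    by (auto simp: X_def)
  have "p + n * q \<le> N"
    using dim_padded_blockC by linarith
  moreover have "j mod q < q" if "j < n * q"
    using that by (cases "q = 0") auto
  ultimately show "norm_adj_block C p (N - p) $$ (i, j) = tile_cols n X (N - p) $$ (i, j)"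
    using i j
    by (cases "j < n * q")
      (auto simp: norm_adj_block_def X_def C_index dhalf_eq_pinv_sqrt
        rowsum_C_upper rowsum_C_lower)
qed (auto simp: norm_adj_block_def X_def)

lemma norm_adj_block_D: "norm_adj_block D q (n * p) = tile_cols n (transpose_mat X) (n * p)"
proof (rule eq_matI)
  fix k t
  assume "k < dim_row (tile_cols n (transpose_mat X) (n * p))"
    and "t < dim_col (tile_cols n (transpose_mat X) (n * p))"
  then have k: "k < q" and t: "t < n * p"
    by (auto simp: X_def)
  then have "p > 0"
    by (cases p) auto
  have "norm_adj_block D q (n * p) $$ (k, t)
      = pinv_sqrt (n * col_sum k) * pinv_sqrt (row_sum (t mod p)) * B $$ (t mod p, k)"
    using k t by (simp add: norm_adj_block_def D_index dhalf_eq_pinv_sqrt rowsum_D_upper rowsum_D_lower)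
  \<comment> \<open>In D the factor n sits on the column sums of B, in C on the row sums.\<close>
  also have "\<dots> = pinv_sqrt (n * row_sum (t mod p)) * pinv_sqrt (col_sum k) * B $$ (t mod p, k)"
    using n_pos by (simp add: pinv_sqrt_mult_swap)
  also have "\<dots> = tile_cols n (transpose_mat X) (n * p) $$ (k, t)"
    using k t \<open>p > 0\<close> by (simp add: X_def)
  finally show "norm_adj_block D q (n * p) $$ (k, t) = tile_cols n (transpose_mat X) (n * p) $$ (k, t)" .
qed (auto simp: norm_adj_block_def X_def)

lemma char_poly_norm_lap_C:
  "char_poly (norm_lap C) * [:-1, 1:] ^ p = [:-1, 1:] ^ (N - p)
     * det ([:-1, 1:]\<^sup>2 \<cdot>\<^sub>m 1\<^sub>m p - map_mat (\<lambda>x. [:x:]) (real n \<cdot>\<^sub>m (X * transpose_mat X)))"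
proof -
  have "p \<le> N"
    using dim_padded_blockC by linarith
  then have "C \<in> carrier_mat (p + (N - p)) (p + (N - p))"
    using C_carrier by simp
  then have "char_poly (norm_lap C) * [:-1, 1:] ^ p = [:-1, 1:] ^ (N - p) * det ([:-1, 1:]\<^sup>2 \<cdot>\<^sub>m 1\<^sub>m p
      - map_mat (\<lambda>x. [:x:]) (norm_adj_block C p (N - p) * transpose_mat (norm_adj_block C p (N - p))))"
    by (rule char_poly_norm_lap_bipartite[OF _ transpose_C]) (use C_carrier \<open>p \<le> N\<close> in \<open>auto simp: C_index\<close>)
  also have "norm_adj_block C p (N - p) * transpose_mat (norm_adj_block C p (N - p))
      = real n \<cdot>\<^sub>m (X * transpose_mat X)"
    using dim_padded_blockC X_carrier by (simp add: norm_adj_block_C tile_cols_mult_transpose)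
  finally show ?thesis .
qed

lemma char_poly_norm_lap_D:
  "char_poly (norm_lap D) * [:-1, 1:] ^ q = [:-1, 1:] ^ (n * p)
     * det ([:-1, 1:]\<^sup>2 \<cdot>\<^sub>m 1\<^sub>m q - map_mat (\<lambda>x. [:x:]) (real n \<cdot>\<^sub>m (transpose_mat X * X)))"
proof -
  have "D \<in> carrier_mat (q + n * p) (q + n * p)"
    using D_carrier by (simp add: add.commute)
  then have "char_poly (norm_lap D) * [:-1, 1:] ^ q = [:-1, 1:] ^ (n * p) * det ([:-1, 1:]\<^sup>2 \<cdot>\<^sub>m 1\<^sub>m q
      - map_mat (\<lambda>x. [:x:]) (norm_adj_block D q (n * p) * transpose_mat (norm_adj_block D q (n * p))))"
    by (rule char_poly_norm_lap_bipartite[OF _ transpose_D]) (use D_carrier in \<open>auto simp: D_index\<close>)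
  also have "norm_adj_block D q (n * p) * transpose_mat (norm_adj_block D q (n * p))
      = real n \<cdot>\<^sub>m (transpose_mat X * X)"
    using X_carrier by (simp add: norm_adj_block_D tile_cols_mult_transpose)
  finally show ?thesis .
qed

lemma char_poly_norm_lap_C_eq_D: "char_poly (norm_lap C) = char_poly (norm_lap D)"
proof -
  let ?y = "[:-1, 1:] :: real poly" and ?c = "map_mat (\<lambda>x::real. [:x:])"
  let ?K = "four_block_mat (?y \<cdot>\<^sub>m 1\<^sub>m p) (?c (real n \<cdot>\<^sub>m X)) (?c (transpose_mat X)) (?y \<cdot>\<^sub>m 1\<^sub>m q)"
  have P: "?c (real n \<cdot>\<^sub>m X) \<in> carrier_mat p q" and Q: "?c (transpose_mat X) \<in> carrier_mat q p"
    using X_carrier by auto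
  have PQ: "?c (real n \<cdot>\<^sub>m X) * ?c (transpose_mat X) = ?c (real n \<cdot>\<^sub>m (X * transpose_mat X))"
    using X_carrier by (simp add: const_poly_hom.mat_hom_mult[symmetric, of _ p q _ p] mult_smult_assoc_mat)
  have QP: "?c (transpose_mat X) * ?c (real n \<cdot>\<^sub>m X) = ?c (real n \<cdot>\<^sub>m (transpose_mat X * X))"
    using X_carrier by (simp add: const_poly_hom.mat_hom_mult[symmetric, of _ q p _ q] mult_smult_distrib)
  let ?dp = "det (?y\<^sup>2 \<cdot>\<^sub>m 1\<^sub>m p - ?c (real n \<cdot>\<^sub>m (X * transpose_mat X)))"
    and ?dq = "det (?y\<^sup>2 \<cdot>\<^sub>m 1\<^sub>m q - ?c (real n \<cdot>\<^sub>m (transpose_mat X * X)))"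
  have upper: "det ?K * ?y ^ p = ?y ^ q * ?dp"
    using det_scalar_four_block_mat_upper[OF P Q] unfolding PQ .
  have lower: "det ?K * ?y ^ q = ?y ^ p * ?dq"
    using det_scalar_four_block_mat_lower[OF P Q] unfolding QP .
  have "p \<le> N"
    using dim_padded_blockC by linarith
  have "char_poly (norm_lap C) * ?y ^ (p + q) = (char_poly (norm_lap C) * ?y ^ p) * ?y ^ q"
    by (simp add: power_add mult.assoc)
  also have "\<dots> = ?y ^ (N - p) * (det ?K * ?y ^ p)"
    unfolding char_poly_norm_lap_C upper by (simp add: mult_ac)
  also have "\<dots> = ?y ^ N * det ?K"
    using \<open>p \<le> N\<close> by (simp add: mult_ac power_add[symmetric])
  also have "\<dots> = ?y ^ (n * p) * (det ?K * ?y ^ q)"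
    by (simp add: mult_ac power_add)
  also have "\<dots> = (char_poly (norm_lap D) * ?y ^ q) * ?y ^ p"
    unfolding lower char_poly_norm_lap_D by (simp add: mult_ac)
  also have "\<dots> = char_poly (norm_lap D) * ?y ^ (p + q)"
    by (simp add: power_add mult_ac)
  finally show ?thesis
    by simp
qed

end

theorem theorem3p3:
  fixes n p q :: nat and B :: "real mat"
  assumes "q \<ge> 1" and "p \<ge> q" and "n \<ge> 1"
    and "B \<in> carrier_mat p q"
    and "\<And>i j. i < p \<Longrightarrow> j < q \<Longrightarrow> B $$ (i, j) \<ge> 0"
  shows "cospectral
           (norm_lap (dsum (blockC n p q B) (0\<^sub>m ((n - 1) * (p - q)) ((n - 1) * (p - q)))))
           (norm_lap (blockD n p q B))"
proof -
  interpret block_pair n p q B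
    using assms by unfold_locales
  have "cospectral (norm_lap C) (norm_lap D)"
    using C_carrier D_carrier
    by (intro cospectral_if_char_poly_eq[OF _ _ char_poly_norm_lap_C_eq_D]) (auto simp: norm_lap_def)
  then show ?thesis
    unfolding C_def D_def .
qed

end
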